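(* Let $\mathbb O=\{-m,\dots,0,\dots,M\}$ with integers $m,M\ge1$, and $\theta=0$. For every $x(0)\in\mathbb O^n$: if there exists a finite legal update sequence from $x(0)$ without crossing updates along which the trajectory reaches the consensus state $(0,\dots,0)$, then there exists a finite legal update sequence from $x(0)$ without crossing updates along which the system reaches a state $y$ (not necessarily an equilibrium) with $y_i=-1$ for every $i$ with $x_i(0)<0$ and $y_i=1$ for every $i$ with $x_i(0)>0$.
   Context: Let $n\ge1$, $\mathcal V=\{1,\dots,n\}$, and let $W=(w_{ij})$ be an $n\times n$ row-stochastic matrix. For $x\in\mathbb O^n$, $i\in\mathcal V$, $z\in\mathbb O$, define $C^i_{\mathrm{social}}(z;x)=\sum_{j=1}^n w_{ij}|z-x_j|$ and $P_i(x)=\{z\in\mathbb O: C^i_{\mathrm{social}}(z;x)\le C^i_{\mathrm{social}}(x_i;x),\ |z-\theta|\le |x_i-\theta|\}$. A legal update sequence from $x(0)$ is a finite sequence $(i_1,z_1),\dots,(i_T,z_T)$ with $i_t\in\mathcal V$, generating $x(1),\dots,x(T)$ where $x(t)$ is obtained from $x(t-1)$ by setting coordinate $i_t$ to $z_t$, such that $z_t\in P_{i_t}(x(t-1))$ for every $t$. The update at step $t$ is a crossing update if $(x_{i_t}(t)-\theta)(x_{i_t}(t-1)-\theta)<0$. *)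

theory Defs
  imports Complex_Main
begin

text \<open>Agents are the elements of a finite type 'n (playing the role of {1..n});
  opinions are integers; an update is a pair (agent, new opinion).\<close>

definition opinions :: "int \<Rightarrow> int \<Rightarrow> int set" where
  "opinions m M = {-m..M}"

definition row_stochastic :: "('n::finite \<Rightarrow> 'n \<Rightarrow> real) \<Rightarrow> bool" where
  "row_stochastic W \<longleftrightarrow> (\<forall>i j. W i j \<ge> 0) \<and> (\<forall>i. (\<Sum>j\<in>UNIV. W i j) = 1)"

definition C_social :: "('n::finite \<Rightarrow> 'n \<Rightarrow> real) \<Rightarrow> 'n \<Rightarrow> int \<Rightarrow> ('n \<Rightarrow> int) \<Rightarrow> real" where
  "C_social W i z x = (\<Sum>j\<in>UNIV. W i j * real_of_int \<bar>z - x j\<bar>)"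

definition P_set :: "int set \<Rightarrow> int \<Rightarrow> ('n::finite \<Rightarrow> 'n \<Rightarrow> real) \<Rightarrow> 'n \<Rightarrow> ('n \<Rightarrow> int) \<Rightarrow> int set" where
  "P_set O\<^sub>s \<theta> W i x = {z \<in> O\<^sub>s. C_social W i z x \<le> C_social W i (x i) x \<and> \<bar>z - \<theta>\<bar> \<le> \<bar>x i - \<theta>\<bar>}"

fun run :: "('n \<Rightarrow> int) \<Rightarrow> ('n \<times> int) list \<Rightarrow> ('n \<Rightarrow> int)" where
  "run x [] = x"
| "run x ((i, z) # s) = run (x(i := z)) s"

definition traj :: "('n \<Rightarrow> int) \<Rightarrow> ('n \<times> int) list \<Rightarrow> nat \<Rightarrow> ('n \<Rightarrow> int)" where
  "traj x s t = run x (take t s)"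

fun legal :: "int set \<Rightarrow> int \<Rightarrow> ('n::finite \<Rightarrow> 'n \<Rightarrow> real) \<Rightarrow> ('n \<Rightarrow> int) \<Rightarrow> ('n \<times> int) list \<Rightarrow> bool" where
  "legal O\<^sub>s \<theta> W x [] = True"
| "legal O\<^sub>s \<theta> W x ((i, z) # s) = (z \<in> P_set O\<^sub>s \<theta> W i x \<and> legal O\<^sub>s \<theta> W (x(i := z)) s)"

fun no_crossing :: "int \<Rightarrow> ('n \<Rightarrow> int) \<Rightarrow> ('n \<times> int) list \<Rightarrow> bool" where
  "no_crossing \<theta> x [] = True"
| "no_crossing \<theta> x ((i, z) # s) = (\<not> ((z - \<theta>) * (x i - \<theta>) < 0) \<and> no_crossing \<theta> (x(i := z)) s)"

end

theory Submission
  imports Defs "HOL-Analysis.Convex"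
begin

text \<open>Along a legal update sequence without crossings every agent keeps the weak sign of its
  initial opinion. Polarize every opinion of an agent with positive (negative) initial opinion to
  at least 1 (at most -1). The image of a legal non-crossing update is again legal and
  non-crossing: polarization only moves agents sitting at 0 to \<open>\<plusminus>1\<close>, which shifts the social cost
  of all opinions beyond \<open>\<plusminus>1\<close> by the same constant, and an agent whose new opinion is clipped
  to \<open>\<plusminus>1\<close> is covered by convexity of the social cost. The polarized image of a sequence reaching
  consensus at 0 ends in the required state.\<close>

lemma convex_on_sum_fun:
  assumes "finite I" "convex S" "\<And>i. i \<in> I \<Longrightarrow> convex_on S (f i)"
  shows "convex_on S (\<lambda>x. \<Sum>i\<in>I. f i x)"
  using assms by (induction I rule: finite_induct) (auto simp: convex_on_const)

lemma convex_on_weighted_abs_dev: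
  fixes w a :: "'a \<Rightarrow> real"
  assumes "finite J" "\<And>j. w j \<ge> 0"
  shows "convex_on UNIV (\<lambda>u. \<Sum>j\<in>J. w j * \<bar>u - a j\<bar>)"
proof (rule convex_on_sum_fun[OF assms(1) convex_UNIV])
  fix j
  have "convex_on UNIV (\<lambda>u. dist u (a j))"
    by (simp add: convex_on_dist dist_commute[of _ "a j"])
  then show "convex_on UNIV (\<lambda>u. w j * \<bar>u - a j\<bar>)"
    using assms(2) by (simp add: convex_on_cmul dist_real_def)
qed

lemma C_social_between_le:
  fixes W :: "'n::finite \<Rightarrow> 'n \<Rightarrow> real"
  assumes "\<And>j. W i j \<ge> 0" and "min z v \<le> p" "p \<le> max z v"
    and "C_social W i z x \<le> C_social W i v x"
  shows "C_social W i p x \<le> C_social W i v x"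
proof -
  define f where "f u = (\<Sum>j\<in>UNIV. W i j * \<bar>u - real_of_int (x j)\<bar>)" for u
  have C_f: "C_social W i u x = f (real_of_int u)" for u
    by (simp add: C_social_def f_def)
  have "convex_on UNIV f"
    unfolding f_def using assms(1) by (rule convex_on_weighted_abs_dev[OF finite_UNIV])
  then have "convex_on {real_of_int (min z v)..real_of_int (max z v)} f"
    by (rule convex_on_subset) simp_all
  moreover have "real_of_int p \<in> {real_of_int (min z v)..real_of_int (max z v)}"
    using assms(2,3) by simp
  ultimately have "f p \<le> max (f (min z v)) (f (max z v))"
    by (rule convex_on_le_max)
  also have "\<dots> = max (f z) (f v)"
    by (cases "z \<le> v") (simp_all add: max.commute)
  finally show ?thesis
    using assms(4) by (simp add: C_f)
qed

lemma abs_diff_shift_eq: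
  fixes a b u v c :: "'a::linordered_idom"
  assumes "\<bar>a\<bar> \<le> c" "\<bar>b\<bar> \<le> c" and "c \<le> u \<and> c \<le> v \<or> u \<le> -c \<and> v \<le> -c"
  shows "\<bar>u - b\<bar> - \<bar>v - b\<bar> = \<bar>u - a\<bar> - \<bar>v - a\<bar>"
  using assms by linarith

lemma C_social_perturb_le:
  fixes W :: "'n::finite \<Rightarrow> 'n \<Rightarrow> real"
  assumes "\<forall>j. x j \<noteq> y j \<longrightarrow> \<bar>x j\<bar> \<le> c \<and> \<bar>y j\<bar> \<le> c"
    and "c \<le> u \<and> c \<le> v \<or> u \<le> -c \<and> v \<le> -c"
    and "C_social W i u x \<le> C_social W i v x"
  shows "C_social W i u y \<le> C_social W i v y"
proof -
  have "\<bar>real_of_int u - y j\<bar> - \<bar>real_of_int v - y j\<bar>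
      = \<bar>real_of_int u - x j\<bar> - \<bar>real_of_int v - x j\<bar>" for j
  proof (cases "x j = y j")
    case False
    then show ?thesis
      using assms(1) False assms(2)
      by (intro abs_diff_shift_eq[where c = "real_of_int c"]) auto
  qed simp
  then have "C_social W i u y - C_social W i v y = C_social W i u x - C_social W i v x"
    by (simp add: C_social_def flip: sum_subtractf right_diff_distrib)
  then show ?thesis
    using assms(3) by simp
qed

definition polarize :: "('n \<Rightarrow> int) \<Rightarrow> 'n \<Rightarrow> int \<Rightarrow> int" where
  "polarize x0 i v = (if x0 i > 0 then max v 1 else if x0 i < 0 then min v (-1) else v)"

definition polarize_state :: "('n \<Rightarrow> int) \<Rightarrow> ('n \<Rightarrow> int) \<Rightarrow> 'n \<Rightarrow> int" where
  "polarize_state x0 x k = polarize x0 k (x k)"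

abbreviation polarize_updates :: "('n \<Rightarrow> int) \<Rightarrow> ('n \<times> int) list \<Rightarrow> ('n \<times> int) list" where
  "polarize_updates x0 s \<equiv> map (\<lambda>(i, z). (i, polarize x0 i z)) s"

definition sign_compatible :: "('n \<Rightarrow> int) \<Rightarrow> ('n \<Rightarrow> int) \<Rightarrow> bool" where
  "sign_compatible x0 x \<longleftrightarrow> (\<forall>i. x i = 0 \<or> sgn (x i) = sgn (x0 i))"

lemma polarize_in_opinions:
  assumes "m \<ge> 1" "M \<ge> 1" "v \<in> opinions m M"
  shows "polarize x0 i v \<in> opinions m M"
  using assms by (auto simp: polarize_def opinions_def)

lemma polarize_state_self: "polarize_state x0 x0 = x0"
  by (simp add: polarize_state_def polarize_def fun_eq_iff)

lemma polarize_state_change_bounded: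
  assumes "sign_compatible x0 x" "x j \<noteq> polarize_state x0 x j"
  shows "\<bar>x j\<bar> \<le> 1 \<and> \<bar>polarize_state x0 x j\<bar> \<le> 1"
  using assms(1)[unfolded sign_compatible_def, rule_format, of j] assms(2)
  by (auto simp: polarize_state_def polarize_def sgn_if split: if_splits)

lemma between_zero_if_not_crossing:
  fixes z v :: int
  assumes "\<bar>z\<bar> \<le> \<bar>v\<bar>" "\<not> z * v < 0"
  shows "min 0 v \<le> z \<and> z \<le> max 0 v"
  using assms by (auto simp: mult_less_0_iff abs_if split: if_splits)

lemma polarize_update:
  fixes W :: "'n::finite \<Rightarrow> 'n \<Rightarrow> real"
  assumes "m \<ge> 1" "M \<ge> 1" "row_stochastic W" "sign_compatible x0 x"
    and z_legal: "z \<in> P_set (opinions m M) 0 W i x" and z_not_crossing: "\<not> z * x i < 0"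
  shows "polarize x0 i z \<in> P_set (opinions m M) 0 W i (polarize_state x0 x)"
    and "\<not> polarize x0 i z * polarize_state x0 x i < 0"
    and "sign_compatible x0 (x(i := z))"
proof -
  let ?p = "polarize x0 i z" and ?q = "polarize x0 i (x i)"
  have z_in: "z \<in> opinions m M" and z_cost: "C_social W i z x \<le> C_social W i (x i) x"
    and "\<bar>z\<bar> \<le> \<bar>x i\<bar>"
    using z_legal by (auto simp: P_set_def)
  then have z_between: "min 0 (x i) \<le> z \<and> z \<le> max 0 (x i)"
    using z_not_crossing by (intro between_zero_if_not_crossing)
  have W_nonneg: "\<And>j. W i j \<ge> 0"
    using assms(3) by (simp add: row_stochastic_def)
  have polarize_changes:
    "\<forall>j. x j \<noteq> polarize_state x0 x j \<longrightarrow> \<bar>x j\<bar> \<le> 1 \<and> \<bar>polarize_state x0 x j\<bar> \<le> 1"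
    using polarize_state_change_bounded[OF assms(4)] by blast
  have xi: "x i = 0 \<or> sgn (x i) = sgn (x0 i)"
    using assms(4) by (simp add: sign_compatible_def)
  show "sign_compatible x0 (x(i := z))"
    using assms(4) xi z_between by (auto simp: sign_compatible_def sgn_if split: if_splits)
  show "\<not> ?p * polarize_state x0 x i < 0"
    using xi z_between
    by (auto simp: polarize_state_def polarize_def sgn_if mult_less_0_iff split: if_splits)
  have "C_social W i ?p (polarize_state x0 x) \<le> C_social W i ?q (polarize_state x0 x)"
  proof -
    consider "?p = ?q"
      | "?q = x i" "min z (x i) \<le> ?p" "?p \<le> max z (x i)"
        "1 \<le> ?p \<and> 1 \<le> x i \<or> ?p \<le> -1 \<and> x i \<le> -1"
      using xi z_between by (auto simp: polarize_def sgn_if split: if_splits)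
    then show ?thesis
    proof cases
      case 2
      have "C_social W i ?p x \<le> C_social W i (x i) x"
        using W_nonneg 2(2,3) z_cost by (rule C_social_between_le)
      then show ?thesis
        unfolding 2(1)
        by (rule C_social_perturb_le[OF polarize_changes 2(4)])
    qed simp
  qed
  moreover have "?p \<in> opinions m M"
    using assms(1,2) z_in by (rule polarize_in_opinions)
  moreover have "\<bar>?p\<bar> \<le> \<bar>?q\<bar>"
    using xi z_between by (auto simp: polarize_def sgn_if split: if_splits)
  ultimately show "?p \<in> P_set (opinions m M) 0 W i (polarize_state x0 x)"
    by (simp add: P_set_def polarize_state_def)
qed

lemma polarize_run:
  fixes W :: "'n::finite \<Rightarrow> 'n \<Rightarrow> real"
  assumes "m \<ge> 1" "M \<ge> 1" "row_stochastic W"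
  shows "sign_compatible x0 x \<Longrightarrow> legal (opinions m M) 0 W x s \<Longrightarrow> no_crossing 0 x s \<Longrightarrow>
    legal (opinions m M) 0 W (polarize_state x0 x) (polarize_updates x0 s)
    \<and> no_crossing 0 (polarize_state x0 x) (polarize_updates x0 s)
    \<and> run (polarize_state x0 x) (polarize_updates x0 s) = polarize_state x0 (run x s)"
proof (induction s arbitrary: x)
  case Nil
  then show ?case by simp
next
  case (Cons u s)
  obtain i z where u: "u = (i, z)"
    by (cases u)
  have "z \<in> P_set (opinions m M) 0 W i x" "\<not> z * x i < 0"
    and "legal (opinions m M) 0 W (x(i := z)) s" "no_crossing 0 (x(i := z)) s"
    using Cons.prems(2,3) by (simp_all add: u)
  note step = polarize_update[OF assms Cons.prems(1) this(1,2)]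
  have upd: "(polarize_state x0 x)(i := polarize x0 i z) = polarize_state x0 (x(i := z))"
    by (auto simp: polarize_state_def)
  have "legal (opinions m M) 0 W (polarize_state x0 (x(i := z))) (polarize_updates x0 s)
    \<and> no_crossing 0 (polarize_state x0 (x(i := z))) (polarize_updates x0 s)
    \<and> run (polarize_state x0 (x(i := z))) (polarize_updates x0 s)
        = polarize_state x0 (run (x(i := z)) s)"
    by (rule Cons.IH[OF step(3) \<open>legal _ _ _ (x(i := z)) s\<close> \<open>no_crossing _ (x(i := z)) s\<close>])
  with step(1,2) show ?case
    by (simp add: u upd)
qed

lemma legal_take: "legal O\<^sub>s \<theta> W x s \<Longrightarrow> legal O\<^sub>s \<theta> W x (take t s)"
  by (induction O\<^sub>s \<theta> W x s arbitrary: t rule: legal.induct) (auto simp: take_Cons')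

lemma no_crossing_take: "no_crossing \<theta> x s \<Longrightarrow> no_crossing \<theta> x (take t s)"
  by (induction \<theta> x s arbitrary: t rule: no_crossing.induct) (auto simp: take_Cons')

theorem lemma4:
  fixes m M :: int and W :: "'n::finite \<Rightarrow> 'n \<Rightarrow> real" and x0 :: "'n \<Rightarrow> int"
  assumes "m \<ge> 1" and "M \<ge> 1"
    and "row_stochastic W"
    and "\<forall>i. x0 i \<in> opinions m M"
    and "\<exists>s t. legal (opinions m M) 0 W x0 s \<and> no_crossing 0 x0 s \<and> t \<le> length s
               \<and> traj x0 s t = (\<lambda>_. 0)"
  shows "\<exists>s t. legal (opinions m M) 0 W x0 s \<and> no_crossing 0 x0 s \<and> t \<le> length s
               \<and> (\<forall>i. x0 i < 0 \<longrightarrow> traj x0 s t i = -1)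
               \<and> (\<forall>i. x0 i > 0 \<longrightarrow> traj x0 s t i = 1)"
proof -
  obtain s t where "legal (opinions m M) 0 W x0 s" "no_crossing 0 x0 s"
    and consensus: "run x0 (take t s) = (\<lambda>_. 0)"
    using assms(5) by (auto simp: traj_def)
  then have "legal (opinions m M) 0 W x0 (take t s)" "no_crossing 0 x0 (take t s)"
    by (simp_all add: legal_take no_crossing_take)
  moreover have "sign_compatible x0 x0"
    by (simp add: sign_compatible_def)
  ultimately have "legal (opinions m M) 0 W x0 (polarize_updates x0 (take t s))
      \<and> no_crossing 0 x0 (polarize_updates x0 (take t s))
      \<and> run x0 (polarize_updates x0 (take t s)) = polarize_state x0 (\<lambda>_. 0)"
    using polarize_run[OF assms(1-3), of x0 x0 "take t s"] consensus
    by (simp add: polarize_state_self)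
  then show ?thesis
    by (intro exI[of _ "polarize_updates x0 (take t s)"] exI[of _ "length (take t s)"])
      (auto simp: traj_def polarize_state_def polarize_def)
qed

end
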